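(* Let $G=(V,E)$ be a finite connected undirected graph with base node $0$ and let $T=(V,E_T)$ be a shortest-path tree rooted at $0$. Any conveyor deployment that achieves full-conveyor coverage on $T$ requires at least $2(|V|-1)$ conveyor robots.
   Context: Time is slotted; each edge traversal takes one slot; robots start at $0$ and each slot move to an adjacent node or stay. $V_{\mathrm{s}}:=V\setminus\{0\}$; $d_i$ is the hop distance from $i$ to $0$. A shortest-path tree $T=(V,E_T)$ rooted at $0$ is a spanning tree of $G$ in which each node's depth equals $d_i$; $p(i)$ is the parent of $i\in V_{\mathrm{s}}$. Conveyor robots carry data samples; at each non-base node $i$, static sensing robots generate samples at completion times $g_i^{(n)}$ of successive sensing attempts. A conveyor deployment (a deterministic specification of conveyor trajectories) achieves full-conveyor coverage on $T$ if: (1) for every $i\in V_{\mathrm{s}}$ and every slot $t$, some conveyor is at $i$ at time $t$ and moves from $i$ to $p(i)$ between $t$ and $t+1$; (2) whenever a sensing attempt at node $i$ completes at time $g_i^{(n)}$, the new sample is immediately transferred (by gossip) to a baseward conveyor co-located at $i$, which then carries it along the $T$-path from $i$ to $0$ one hop per slot without handing it off or waiting, until delivered at the base; (3) every conveyor moves along $T$ at unit speed and never waits, i.e., traverses exactly one edge of $T$ in every slot. *)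

theory Defs
  imports Main
begin

definition ugraph :: "'v set \<Rightarrow> ('v \<Rightarrow> 'v \<Rightarrow> bool) \<Rightarrow> bool" where
  "ugraph V E \<longleftrightarrow> finite V \<and> (\<forall>a b. E a b \<longrightarrow> a \<in> V \<and> b \<in> V \<and> E b a \<and> a \<noteq> b)"

definition walk :: "('v \<Rightarrow> 'v \<Rightarrow> bool) \<Rightarrow> 'v list \<Rightarrow> bool" where
  "walk E xs \<longleftrightarrow> xs \<noteq> [] \<and> (\<forall>k. Suc k < length xs \<longrightarrow> E (xs ! k) (xs ! Suc k))"

definition reach_in :: "('v \<Rightarrow> 'v \<Rightarrow> bool) \<Rightarrow> nat \<Rightarrow> 'v \<Rightarrow> 'v \<Rightarrow> bool" where
  "reach_in E n a c \<longleftrightarrow> (\<exists>xs. walk E xs \<and> length xs = Suc n \<and> hd xs = a \<and> last xs = c)"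

definition connected_graph :: "'v set \<Rightarrow> ('v \<Rightarrow> 'v \<Rightarrow> bool) \<Rightarrow> bool" where
  "connected_graph V E \<longleftrightarrow> (\<forall>a\<in>V. \<forall>c\<in>V. \<exists>n. reach_in E n a c)"

definition hop_dist :: "('v \<Rightarrow> 'v \<Rightarrow> bool) \<Rightarrow> 'v \<Rightarrow> 'v \<Rightarrow> nat" where
  "hop_dist E a c = (LEAST n. reach_in E n a c)"

definition has_cycle :: "('v \<Rightarrow> 'v \<Rightarrow> bool) \<Rightarrow> bool" where
  "has_cycle E \<longleftrightarrow> (\<exists>xs. walk E xs \<and> 4 \<le> length xs \<and> hd xs = last xs \<and> distinct (tl xs))"

definition is_tree :: "'v set \<Rightarrow> ('v \<Rightarrow> 'v \<Rightarrow> bool) \<Rightarrow> bool" where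
  "is_tree V T \<longleftrightarrow> ugraph V T \<and> connected_graph V T \<and> \<not> has_cycle T"

definition shortest_path_tree ::
  "'v set \<Rightarrow> ('v \<Rightarrow> 'v \<Rightarrow> bool) \<Rightarrow> 'v \<Rightarrow> ('v \<Rightarrow> 'v \<Rightarrow> bool) \<Rightarrow> bool" where
  "shortest_path_tree V E b T \<longleftrightarrow>
     is_tree V T \<and> (\<forall>x y. T x y \<longrightarrow> E x y) \<and>
     (\<forall>i\<in>V. hop_dist T b i = hop_dist E b i)"

definition parent_map ::
  "'v set \<Rightarrow> ('v \<Rightarrow> 'v \<Rightarrow> bool) \<Rightarrow> 'v \<Rightarrow> ('v \<Rightarrow> 'v) \<Rightarrow> bool" where
  "parent_map V T b p \<longleftrightarrow>
     (\<forall>i\<in>V - {b}. T i (p i) \<and> Suc (hop_dist T b (p i)) = hop_dist T b i)"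

text \<open>Full-conveyor coverage on T by the conveyors R with trajectories pos
(pos r t = node occupied by conveyor r at slot t), parent map p, and
sensing completion times g i n (n-th attempt at node i).\<close>

definition full_conveyor_coverage ::
  "'v set \<Rightarrow> 'v \<Rightarrow> ('v \<Rightarrow> 'v \<Rightarrow> bool) \<Rightarrow> ('v \<Rightarrow> 'v) \<Rightarrow> ('v \<Rightarrow> nat \<Rightarrow> nat)
   \<Rightarrow> 'r set \<Rightarrow> ('r \<Rightarrow> nat \<Rightarrow> 'v) \<Rightarrow> bool" where
  "full_conveyor_coverage V b T p g R pos \<longleftrightarrow>
     \<comment> \<open>(1) every tree edge is traversed baseward in every slot\<close>
     (\<forall>i\<in>V - {b}. \<forall>t. \<exists>r\<in>R. pos r t = i \<and> pos r (Suc t) = p i) \<and>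
     \<comment> \<open>(2) each sample is picked up at completion and carried to the base without waiting\<close>
     (\<forall>i\<in>V - {b}. \<forall>n. \<exists>r\<in>R. \<forall>k\<le>hop_dist T b i. pos r (g i n + k) = (p ^^ k) i) \<and>
     \<comment> \<open>(3) every conveyor traverses exactly one edge of T in every slot\<close>
     (\<forall>r\<in>R. \<forall>t. T (pos r t) (pos r (Suc t)))"

end

theory Submission
  imports Defs
begin

text \<open>Measure each conveyor by its depth in \<open>T\<close>. In every slot each of the \<open>|V| - 1\<close> non-base
nodes is left baseward by some conveyor, which thereby crosses down from the node's depth \<open>d\<close> to
\<open>d - 1\<close>; so in \<open>L\<close> slots there are at least \<open>(|V| - 1) L\<close> down-crossings, all distinct.
A single conveyor changes its depth by at most one per slot, so it makes at most one crossing per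
slot, and between two down-crossings of a level it must cross that level upwards again: it makes
at most \<open>(L + K) / 2\<close> down-crossings, \<open>K\<close> being the depth of \<open>T\<close>. Letting \<open>L\<close> grow gives at least
\<open>2 (|V| - 1)\<close> conveyors. Only that \<open>T\<close> is a connected undirected graph and coverage conditions
(1) and (3) are used: the depth \<open>hop_dist T b\<close> changes by at most one along any edge of \<open>T\<close>,
shortest-path tree or not.\<close>

lemma walk_snoc:
  assumes "walk E xs" "E (last xs) y"
  shows "walk E (xs @ [y])"
  unfolding walk_def
proof (intro conjI allI impI)
  show "xs @ [y] \<noteq> []" by simp
  fix k assume k: "Suc k < length (xs @ [y])"
  show "E ((xs @ [y]) ! k) ((xs @ [y]) ! Suc k)"
  proof (cases "Suc k < length xs")
    case True
    then show ?thesis using assms(1) by (simp add: nth_append walk_def)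
  next
    case False
    with k have "k = length xs - 1" by simp
    moreover have "xs \<noteq> []" using assms(1) unfolding walk_def by blast
    ultimately show ?thesis using assms(2) by (simp add: nth_append last_conv_nth)
  qed
qed

lemma reach_in_snoc:
  assumes "reach_in E n a x" "E x y"
  shows "reach_in E (Suc n) a y"
proof -
  obtain xs where xs: "walk E xs" "length xs = Suc n" "hd xs = a" "last xs = x"
    using assms(1) unfolding reach_in_def by blast
  have "walk E (xs @ [y])" using xs(1,4) assms(2) by (simp add: walk_snoc)
  moreover have "hd (xs @ [y]) = a" using xs(1,3) unfolding walk_def by simp
  ultimately show ?thesis using xs(2) unfolding reach_in_def by fastforce
qed

lemma hop_dist_le_Suc:
  assumes "connected_graph V E" "a \<in> V" "x \<in> V" "E x y"
  shows "hop_dist E a y \<le> Suc (hop_dist E a x)"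
proof -
  have "\<exists>n. reach_in E n a x" using assms(1-3) unfolding connected_graph_def by blast
  then have "reach_in E (hop_dist E a x) a x" unfolding hop_dist_def by (rule LeastI_ex)
  then have "reach_in E (Suc (hop_dist E a x)) a y" using assms(4) by (rule reach_in_snoc)
  then show ?thesis unfolding hop_dist_def by (rule Least_le)
qed

lemma card_falls_eq_card_rises:
  fixes s :: "nat \<Rightarrow> bool"
  shows "card {t. t < L \<and> s t \<and> \<not> s (Suc t)} + of_bool (s L)
       = card {t. t < L \<and> \<not> s t \<and> s (Suc t)} + of_bool (s 0)"
proof (induction L)
  case 0
  then show ?case by simp
next
  case (Suc L)
  have Suc_split: "{t. t < Suc L \<and> P t} = {t. t < L \<and> P t} \<union> (if P L then {L} else {})" for P
    by (auto simp: less_Suc_eq)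
  show ?case
    unfolding Suc_split[of "\<lambda>t. s t \<and> \<not> s (Suc t)"] Suc_split[of "\<lambda>t. \<not> s t \<and> s (Suc t)"]
    using Suc.IH by (cases "s L"; cases "s (Suc L)") auto
qed

lemma card_falls_le_card_rises:
  fixes s :: "nat \<Rightarrow> bool"
  shows "card {t. t < L \<and> s t \<and> \<not> s (Suc t)} \<le> card {t. t < L \<and> \<not> s t \<and> s (Suc t)} + 1"
  using card_falls_eq_card_rises[of L s] by (cases "s 0") auto

definition down_crossings :: "(nat \<Rightarrow> nat) \<Rightarrow> nat \<Rightarrow> nat \<Rightarrow> (nat \<times> nat) set" where
  "down_crossings f K L = (SIGMA k:{1..K}. {t. t < L \<and> k \<le> f t \<and> f (Suc t) < k})"

definition up_crossings :: "(nat \<Rightarrow> nat) \<Rightarrow> nat \<Rightarrow> nat \<Rightarrow> (nat \<times> nat) set" where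
  "up_crossings f K L = (SIGMA k:{1..K}. {t. t < L \<and> f t < k \<and> k \<le> f (Suc t)})"

lemma finite_down_crossings [simp]: "finite (down_crossings f K L)"
  unfolding down_crossings_def by (rule finite_SigmaI) auto

lemma finite_up_crossings [simp]: "finite (up_crossings f K L)"
  unfolding up_crossings_def by (rule finite_SigmaI) auto

lemma card_down_crossings_le:
  "card (down_crossings f K L) \<le> card (up_crossings f K L) + K"
proof -
  have "card (down_crossings f K L) = (\<Sum>k\<in>{1..K}. card {t. t < L \<and> k \<le> f t \<and> f (Suc t) < k})"
    unfolding down_crossings_def by (subst card_SigmaI) auto
  also have "\<dots> \<le> (\<Sum>k\<in>{1..K}. card {t. t < L \<and> f t < k \<and> k \<le> f (Suc t)} + 1)"
    using card_falls_le_card_rises[of L "\<lambda>t. _ \<le> f t"] by (intro sum_mono) (simp add: not_le)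
  also have "\<dots> = card (up_crossings f K L) + K"
    unfolding up_crossings_def by (subst card_SigmaI) (simp_all add: sum.distrib del: One_nat_def)
  finally show ?thesis .
qed

lemma card_crossings_le:
  assumes "\<And>t. f (Suc t) \<le> Suc (f t)" "\<And>t. f t \<le> Suc (f (Suc t))"
  shows "card (down_crossings f K L) + card (up_crossings f K L) \<le> L"
proof -
  let ?C = "down_crossings f K L \<union> up_crossings f K L"
  have "down_crossings f K L \<inter> up_crossings f K L = {}"
    unfolding down_crossings_def up_crossings_def by auto
  then have "card (down_crossings f K L) + card (up_crossings f K L) = card ?C"
    by (simp add: card_Un_disjoint)
  also have "card ?C \<le> card {..<L}"
  proof (rule card_inj_on_le)
    show "inj_on snd ?C"
    proof (rule inj_onI)
      fix x y assume "x \<in> ?C" "y \<in> ?C" "snd x = snd y"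
      then show "x = y"
        using assms[of "snd x"] unfolding down_crossings_def up_crossings_def
        by (cases x; cases y) auto
    qed
    show "snd ` ?C \<subseteq> {..<L}" unfolding down_crossings_def up_crossings_def by auto
  qed simp
  finally show ?thesis by simp
qed

lemma twice_card_down_crossings_le:
  assumes "\<And>t. f (Suc t) \<le> Suc (f t)" "\<And>t. f t \<le> Suc (f (Suc t))"
  shows "2 * card (down_crossings f K L) \<le> L + K"
  using card_crossings_le[of f, OF assms, of K L] card_down_crossings_le[of f K L] by linarith

lemma le_of_mult_le_mult_add:
  fixes m c L K :: nat
  assumes "2 * m * L \<le> c * (L + K)" "2 * m * K < L"
  shows "2 * m \<le> c"
proof (rule ccontr)
  assume "\<not> 2 * m \<le> c"
  then have "Suc c \<le> 2 * m" by simp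
  then have "Suc c * (L + K) \<le> 2 * m * (L + K)" by (rule mult_le_mono1)
  then have "c * (L + K) + (L + K) \<le> 2 * m * L + 2 * m * K"
    by (simp only: mult_Suc add_mult_distrib2 add.commute)
  then show False using assms by linarith
qed

lemma twice_card_le_card_of_descents:
  fixes level :: "'v \<Rightarrow> nat" and pos :: "'r \<Rightarrow> nat \<Rightarrow> 'v"
  assumes "finite N" "finite R"
    and up: "\<And>r t. r \<in> R \<Longrightarrow> level (pos r (Suc t)) \<le> Suc (level (pos r t))"
    and down: "\<And>r t. r \<in> R \<Longrightarrow> level (pos r t) \<le> Suc (level (pos r (Suc t)))"
    and descent: "\<And>i t. i \<in> N \<Longrightarrow> \<exists>r\<in>R. pos r t = i \<and> level (pos r (Suc t)) < level i"
  shows "2 * card N \<le> card R"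
proof -
  define K where "K = Max (level ` N)"
  define L where "L = 2 * card N * K + 1"
  define S where "S = (SIGMA r:R. down_crossings (level \<circ> pos r) K L)"
  define agent where
    "agent i t = (SOME r. r \<in> R \<and> pos r t = i \<and> level (pos r (Suc t)) < level i)" for i t
  have agent: "agent i t \<in> R \<and> pos (agent i t) t = i \<and> level (pos (agent i t) (Suc t)) < level i"
    if "i \<in> N" for i t
    using descent[OF that, of t] unfolding agent_def Bex_def by (rule someI_ex)
  have "card (N \<times> {..<L}) \<le> card S"
  proof (rule card_inj_on_le)
    show "inj_on (\<lambda>(i, t). (agent i t, level i, t)) (N \<times> {..<L})"
    proof (rule inj_onI, clarsimp)
      fix i j t assume i: "i \<in> N" and j: "j \<in> N" and same: "agent i t = agent j t"
      have "i = pos (agent i t) t" using agent[OF i] by simp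
      also have "\<dots> = j" using agent[OF j] same by simp
      finally show "i = j" .
    qed
    show "(\<lambda>(i, t). (agent i t, level i, t)) ` (N \<times> {..<L}) \<subseteq> S"
    proof clarify
      fix i t assume i: "i \<in> N" and "t < L"
      moreover have "level i \<le> K" unfolding K_def using \<open>finite N\<close> i by simp
      ultimately show "(agent i t, level i, t) \<in> S"
        using agent[OF i, of t] unfolding S_def down_crossings_def by auto
    qed
    show "finite S" unfolding S_def using \<open>finite R\<close> by simp
  qed
  then have "2 * card N * L \<le> 2 * card S" by (simp add: card_cartesian_product)
  also have "2 * card S = (\<Sum>r\<in>R. 2 * card (down_crossings (level \<circ> pos r) K L))"
    unfolding S_def using \<open>finite R\<close> by (simp add: card_SigmaI sum_distrib_left)
  also have "\<dots> \<le> (\<Sum>r\<in>R. L + K)"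
    by (intro sum_mono twice_card_down_crossings_le) (simp_all add: up down)
  also have "\<dots> = card R * (L + K)" by simp
  finally show ?thesis by (rule le_of_mult_le_mult_add) (simp add: L_def)
qed

theorem theorem4:
  fixes V :: "'v set" and E T :: "'v \<Rightarrow> 'v \<Rightarrow> bool" and b :: 'v
    and p :: "'v \<Rightarrow> 'v" and g :: "'v \<Rightarrow> nat \<Rightarrow> nat"
    and R :: "'r set" and pos :: "'r \<Rightarrow> nat \<Rightarrow> 'v"
  assumes "ugraph V E" and "connected_graph V E" and "b \<in> V"
    and "shortest_path_tree V E b T" and "parent_map V T b p"
    and "finite R"
    and "full_conveyor_coverage V b T p g R pos"
  shows "2 * (card V - 1) \<le> card R"
proof -
  have T: "ugraph V T" "connected_graph V T"
    using assms(4) unfolding shortest_path_tree_def is_tree_def by auto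
  have move: "T (pos r t) (pos r (Suc t))" if "r \<in> R" for r t
    using assms(7) that unfolding full_conveyor_coverage_def by blast
  have "2 * card (V - {b}) \<le> card R"
  proof (rule twice_card_le_card_of_descents[where level = "hop_dist T b"])
    show "finite (V - {b})" using T(1) unfolding ugraph_def by blast
    show "hop_dist T b (pos r (Suc t)) \<le> Suc (hop_dist T b (pos r t))"
      and "hop_dist T b (pos r t) \<le> Suc (hop_dist T b (pos r (Suc t)))" if "r \<in> R" for r t
      using hop_dist_le_Suc[OF T(2) \<open>b \<in> V\<close>] move[OF that] T(1)
      unfolding ugraph_def by meson+
    show "\<exists>r\<in>R. pos r t = i \<and> hop_dist T b (pos r (Suc t)) < hop_dist T b i"
      if "i \<in> V - {b}" for i t
      using assms(5,7) that unfolding parent_map_def full_conveyor_coverage_def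
      by (metis lessI)
  qed (rule assms(6))
  then show ?thesis using assms(3) T(1) unfolding ugraph_def by simp
qed

end
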